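(* Let $\rho_1,\rho_2:[a,b]\to\mathbb{R}$ be such that each $\rho_i$ is continuous on $[a,b]$ except at the points of a finite set $D_i\subset[a,b]$, at which it has discontinuities of the first kind (the one-sided limits exist and are finite), and assume $D_1\cap D_2=\emptyset$. Let $(\rho_1^\epsilon)$, $(\rho_2^\epsilon)$ be families of functions on $[a,b]$ with $\lim_{\epsilon\to0}\rho_1^\epsilon=\rho_1$ and $\lim_{\epsilon\to0}\rho_2^\epsilon=\rho_2$ on $[a,b]$. Then $\lim_{\epsilon\to0}(\rho_1^\epsilon+\rho_2^\epsilon)=\rho_1+\rho_2$ on $[a,b]$.
   Context: For functions $\rho,\hat\rho:[a,b]\to\mathbb{R}$ and $\Delta>0$, write $\rho\in O(\hat\rho,\Delta)$ on $[a,b]$ iff for every $x\in[a,b]$: $\inf_{y\in[a,b],|y-x|\le\Delta}\hat\rho(y)-\Delta<\rho(x)<\sup_{y\in[a,b],|y-x|\le\Delta}\hat\rho(y)+\Delta$. For a family $(\rho^\epsilon)_{\epsilon>0}$, $\lim_{\epsilon\to0}\rho^\epsilon=\hat\rho$ on $[a,b]$ means: for every $\Delta>0$ there is $\epsilon_0>0$ with $\rho^\epsilon\in O(\hat\rho,\Delta)$ on $[a,b]$ for all $\epsilon\in(0,\epsilon_0)$. *)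

theory Defs
  imports "HOL-Analysis.Analysis"
begin

definition in_O :: "real \<Rightarrow> real \<Rightarrow> (real \<Rightarrow> real) \<Rightarrow> (real \<Rightarrow> real) \<Rightarrow> real \<Rightarrow> bool" where
  "in_O a b rho rhohat Delta \<longleftrightarrow>
     (\<forall>x\<in>{a..b}.
        (INF y\<in>{y\<in>{a..b}. \<bar>y - x\<bar> \<le> Delta}. rhohat y) - Delta < rho x \<and>
        rho x < (SUP y\<in>{y\<in>{a..b}. \<bar>y - x\<bar> \<le> Delta}. rhohat y) + Delta)"

definition family_lim :: "real \<Rightarrow> real \<Rightarrow> (real \<Rightarrow> real \<Rightarrow> real) \<Rightarrow> (real \<Rightarrow> real) \<Rightarrow> bool" where
  "family_lim a b rhoe rhohat \<longleftrightarrow>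
     (\<forall>Delta>0. \<exists>eps0>0. \<forall>eps. 0 < eps \<and> eps < eps0 \<longrightarrow> in_O a b (rhoe eps) rhohat Delta)"

definition piecewise_cont_first_kind :: "real \<Rightarrow> real \<Rightarrow> real set \<Rightarrow> (real \<Rightarrow> real) \<Rightarrow> bool" where
  "piecewise_cont_first_kind a b D rho \<longleftrightarrow>
     finite D \<and> D \<subseteq> {a..b} \<and>
     (\<forall>x\<in>{a..b} - D. continuous (at x within {a..b}) rho) \<and>
     (\<forall>d\<in>D. (a < d \<longrightarrow> (\<exists>L. (rho \<longlongrightarrow> L) (at_left d))) \<and>
             (d < b \<longrightarrow> (\<exists>R. (rho \<longlongrightarrow> R) (at_right d))))"

end

theory Submission
  imports Defs
begin

text \<open>Where \<open>\<rho>\<^sub>2\<close> is continuous it oscillates by less than \<open>\<eta>\<close> on a small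
  neighbourhood, and there the lower and upper envelopes of \<open>\<rho>\<^sub>1 + \<rho>\<^sub>2\<close> agree up to
  \<open>\<eta>\<close> with the sums of the envelopes of \<open>\<rho>\<^sub>1\<close> and \<open>\<rho>\<^sub>2\<close>; in general the sum of the
  envelopes is only an outer bound, which is why \<open>D\<^sub>1 \<inter> D\<^sub>2 = {}\<close> is needed. Since at
  every point one of the two functions is continuous, a Lebesgue number of the resulting
  cover of \<open>[a,b]\<close> gives one radius for all points, and adding the two approximation
  bounds at that radius gives the bound for the sum. The envelopes are infima and suprema
  of real numbers, so they need the functions to be bounded: the one-sided limits make
  them locally bounded, and compactness makes them bounded.\<close>

definition oscillation_less_on :: "'a set \<Rightarrow> ('a \<Rightarrow> 'b::metric_space) \<Rightarrow> real \<Rightarrow> bool" where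
  "oscillation_less_on T f \<eta> \<longleftrightarrow> (\<forall>y\<in>T. \<forall>z\<in>T. dist (f y) (f z) < \<eta>)"

lemma oscillation_less_on_subset:
  "oscillation_less_on T f \<eta> \<Longrightarrow> S \<subseteq> T \<Longrightarrow> oscillation_less_on S f \<eta>"
  unfolding oscillation_less_on_def by blast

lemma continuous_within_imp_oscillation_less_on:
  assumes "continuous (at x within S) f" "\<eta> > 0"
  obtains r where "r > 0" "oscillation_less_on (S \<inter> ball x r) f \<eta>"
proof -
  obtain r where "r > 0" and r: "\<forall>y\<in>S. dist y x < r \<longrightarrow> dist (f y) (f x) < \<eta>/2"
    using assms unfolding continuous_within_eps_delta by (meson half_gt_zero)
  have "dist (f y) (f z) < \<eta>" if "y \<in> S \<inter> ball x r" "z \<in> S \<inter> ball x r" for y z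
    by (rule dist_triangle_half_l[of _ "f x"]) (use r that in \<open>auto simp: dist_commute\<close>)
  then show ?thesis
    using \<open>r > 0\<close> that unfolding oscillation_less_on_def by blast
qed

lemma compact_uniform_oscillation_less_either:
  assumes "compact S" "\<eta> > 0"
    and cont: "\<And>x. x \<in> S \<Longrightarrow> continuous (at x within S) f \<or> continuous (at x within S) g"
  obtains \<delta> where "\<delta> > 0"
    "\<And>x. x \<in> S \<Longrightarrow> oscillation_less_on (S \<inter> cball x \<delta>) f \<eta> \<or>
                     oscillation_less_on (S \<inter> cball x \<delta>) g \<eta>"
proof -
  have "\<exists>r>0. oscillation_less_on (S \<inter> ball x r) f \<eta> \<or> oscillation_less_on (S \<inter> ball x r) g \<eta>"
    if "x \<in> S" for x
    using cont[OF that] continuous_within_imp_oscillation_less_on[OF _ \<open>\<eta> > 0\<close>] by metis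
  then obtain r where r: "\<And>x. x \<in> S \<Longrightarrow> r x > 0"
    and osc: "\<And>x. x \<in> S \<Longrightarrow> oscillation_less_on (S \<inter> ball x (r x)) f \<eta> \<or>
                                oscillation_less_on (S \<inter> ball x (r x)) g \<eta>"
    by metis
  have "S \<subseteq> \<Union>((\<lambda>x. ball x (r x)) ` S)"
    using r by force
  then obtain e where "e > 0" and e: "\<And>x. x \<in> S \<Longrightarrow> \<exists>x0\<in>S. ball x e \<subseteq> ball x0 (r x0)"
    using Heine_Borel_lemma[OF \<open>compact S\<close>] by (metis (no_types, lifting) imageE open_ball)
  show ?thesis
  proof
    show "e/2 > 0" using \<open>e > 0\<close> by simp
    fix x assume "x \<in> S"
    then obtain x0 where "x0 \<in> S" and "ball x e \<subseteq> ball x0 (r x0)" using e by blast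
    moreover have "cball x (e/2) \<subseteq> ball x e" using \<open>e > 0\<close> by auto
    ultimately have sub: "S \<inter> cball x (e/2) \<subseteq> S \<inter> ball x0 (r x0)" by blast
    then show "oscillation_less_on (S \<inter> cball x (e/2)) f \<eta> \<or>
               oscillation_less_on (S \<inter> cball x (e/2)) g \<eta>"
      using osc[OF \<open>x0 \<in> S\<close>]
      by (elim disjE) (simp_all add: oscillation_less_on_subset[OF _ sub])
  qed
qed

lemma bounded_image_if_locally_bounded:
  fixes f :: "'a::topological_space \<Rightarrow> 'b::real_normed_vector"
  assumes "compact S"
    and loc: "\<And>x. x \<in> S \<Longrightarrow> \<exists>M. eventually (\<lambda>y. y \<in> S \<longrightarrow> norm (f y) \<le> M) (nhds x)"
  shows "bounded (f ` S)"
proof -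
  have "\<exists>U M. open U \<and> x \<in> U \<and> (\<forall>y\<in>U \<inter> S. norm (f y) \<le> M)" if "x \<in> S" for x
    using loc[OF that] unfolding eventually_nhds by blast
  then obtain U M where U: "\<And>x. x \<in> S \<Longrightarrow> open (U x) \<and> x \<in> U x"
    and M: "\<And>x y. x \<in> S \<Longrightarrow> y \<in> U x \<inter> S \<Longrightarrow> norm (f y) \<le> M x"
    by metis
  have "S \<subseteq> (\<Union>x\<in>S. U x)" using U by blast
  then obtain C where C: "C \<subseteq> S" "finite C" "S \<subseteq> (\<Union>c\<in>C. U c)"
    using compactE_image[OF \<open>compact S\<close>, of S U] U by metis
  have "norm (f y) \<le> (\<Sum>c\<in>C. \<bar>M c\<bar>)" if "y \<in> S" for y
  proof -
    obtain c where "c \<in> C" "y \<in> U c" using C \<open>y \<in> S\<close> by blast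
    then have "norm (f y) \<le> \<bar>M c\<bar>" using M[of c y] C \<open>y \<in> S\<close> by force
    also have "\<dots> \<le> (\<Sum>c\<in>C. \<bar>M c\<bar>)"
      using \<open>c \<in> C\<close> \<open>finite C\<close> by (intro member_le_sum) auto
    finally show ?thesis .
  qed
  then show ?thesis unfolding bounded_iff by blast
qed

lemma tendsto_imp_eventually_abs_le:
  fixes f :: "'a \<Rightarrow> real"
  assumes "(f \<longlongrightarrow> L) F"
  shows "eventually (\<lambda>y. \<bar>f y\<bar> \<le> \<bar>L\<bar> + 1) F"
  using tendstoD[OF assms zero_less_one] by eventually_elim (auto simp: dist_real_def)

lemma piecewise_cont_first_kind_locally_bounded:
  assumes pc: "piecewise_cont_first_kind a b D f" and x: "x \<in> {a..b}"
  shows "\<exists>M. eventually (\<lambda>y. y \<in> {a..b} \<longrightarrow> \<bar>f y\<bar> \<le> M) (nhds x)"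
proof (cases "x \<in> D")
  case False
  with pc x have "(f \<longlongrightarrow> f x) (at x within {a..b})"
    unfolding piecewise_cont_first_kind_def continuous_within by blast
  then have "eventually (\<lambda>y. \<bar>f y\<bar> \<le> \<bar>f x\<bar> + 1) (at x within {a..b})"
    by (rule tendsto_imp_eventually_abs_le)
  then have "eventually (\<lambda>y. y \<noteq> x \<longrightarrow> y \<in> {a..b} \<longrightarrow> \<bar>f y\<bar> \<le> \<bar>f x\<bar> + 1) (nhds x)"
    unfolding eventually_at_filter .
  then show ?thesis
    by (intro exI[of _ "\<bar>f x\<bar> + 1"]) (auto elim: eventually_mono)
next
  case True
  obtain Ml where Ml: "eventually (\<lambda>y. y \<in> {a..b} \<longrightarrow> \<bar>f y\<bar> \<le> Ml) (at_left x)"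
  proof (cases "a < x")
    case True
    with pc \<open>x \<in> D\<close> obtain L where "(f \<longlongrightarrow> L) (at_left x)"
      unfolding piecewise_cont_first_kind_def by blast
    from tendsto_imp_eventually_abs_le[OF this]
    have "eventually (\<lambda>y. y \<in> {a..b} \<longrightarrow> \<bar>f y\<bar> \<le> \<bar>L\<bar> + 1) (at_left x)"
      by eventually_elim simp
    then show ?thesis by (rule that)
  next
    case False
    then have "eventually (\<lambda>y. y \<in> {a..b} \<longrightarrow> \<bar>f y\<bar> \<le> 0) (at_left x)"
      unfolding eventually_at_left_field by (intro exI[of _ "x - 1"]) auto
    then show ?thesis by (rule that)
  qed
  obtain Mr where Mr: "eventually (\<lambda>y. y \<in> {a..b} \<longrightarrow> \<bar>f y\<bar> \<le> Mr) (at_right x)"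
  proof (cases "x < b")
    case True
    with pc \<open>x \<in> D\<close> obtain R where "(f \<longlongrightarrow> R) (at_right x)"
      unfolding piecewise_cont_first_kind_def by blast
    from tendsto_imp_eventually_abs_le[OF this]
    have "eventually (\<lambda>y. y \<in> {a..b} \<longrightarrow> \<bar>f y\<bar> \<le> \<bar>R\<bar> + 1) (at_right x)"
      by eventually_elim simp
    then show ?thesis by (rule that)
  next
    case False
    then have "eventually (\<lambda>y. y \<in> {a..b} \<longrightarrow> \<bar>f y\<bar> \<le> 0) (at_right x)"
      unfolding eventually_at_right_field by (intro exI[of _ "x + 1"]) auto
    then show ?thesis by (rule that)
  qed
  let ?M = "max (max Ml Mr) \<bar>f x\<bar>"
  have "eventually (\<lambda>y. y \<in> {a..b} \<longrightarrow> \<bar>f y\<bar> \<le> ?M) (at_left x)"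
    using Ml by eventually_elim auto
  moreover have "eventually (\<lambda>y. y \<in> {a..b} \<longrightarrow> \<bar>f y\<bar> \<le> ?M) (at_right x)"
    using Mr by eventually_elim auto
  ultimately show ?thesis
    unfolding eventually_nhds_conv_at eventually_at_split by auto
qed

lemma piecewise_cont_first_kind_bounded:
  "piecewise_cont_first_kind a b D f \<Longrightarrow> bounded (f ` {a..b})"
  using piecewise_cont_first_kind_locally_bounded
  by (intro bounded_image_if_locally_bounded) auto

lemma cINF_add_le_cINF_plus_cSUP:
  fixes f g :: "'a \<Rightarrow> real"
  assumes "N \<noteq> {}" "bounded (f ` N)" "bounded (g ` N)"
  shows "(INF y\<in>N. f y + g y) \<le> (INF y\<in>N. f y) + (SUP y\<in>N. g y)"
proof -
  have "(INF y\<in>N. f y + g y) - (SUP y\<in>N. g y) \<le> (INF y\<in>N. f y)"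
  proof (rule cINF_greatest[OF \<open>N \<noteq> {}\<close>])
    fix y assume "y \<in> N"
    have "(INF y\<in>N. f y + g y) \<le> f y + g y"
      using bounded_imp_bdd_below[OF bounded_plus_comp[OF assms(2,3)]] \<open>y \<in> N\<close>
      by (rule cINF_lower)
    moreover have "g y \<le> (SUP y\<in>N. g y)"
      using \<open>y \<in> N\<close> bounded_imp_bdd_above[OF assms(3)] by (rule cSUP_upper)
    ultimately show "(INF y\<in>N. f y + g y) - (SUP y\<in>N. g y) \<le> f y" by linarith
  qed
  then show ?thesis by linarith
qed

lemma cSUP_plus_cINF_le_cSUP_add:
  fixes f g :: "'a \<Rightarrow> real"
  assumes "N \<noteq> {}" "bounded (f ` N)" "bounded (g ` N)"
  shows "(SUP y\<in>N. f y) + (INF y\<in>N. g y) \<le> (SUP y\<in>N. f y + g y)"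
proof -
  have "(SUP y\<in>N. f y) \<le> (SUP y\<in>N. f y + g y) - (INF y\<in>N. g y)"
  proof (rule cSUP_least[OF \<open>N \<noteq> {}\<close>])
    fix y assume "y \<in> N"
    have "f y + g y \<le> (SUP y\<in>N. f y + g y)"
      using \<open>y \<in> N\<close> bounded_imp_bdd_above[OF bounded_plus_comp[OF assms(2,3)]]
      by (rule cSUP_upper)
    moreover have "(INF y\<in>N. g y) \<le> g y"
      using bounded_imp_bdd_below[OF assms(3)] \<open>y \<in> N\<close> by (rule cINF_lower)
    ultimately show "f y \<le> (SUP y\<in>N. f y + g y) - (INF y\<in>N. g y)" by linarith
  qed
  then show ?thesis by linarith
qed

lemma cSUP_le_cINF_plus_if_oscillation_less_on:
  fixes g :: "'a \<Rightarrow> real"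
  assumes "N \<noteq> {}" "oscillation_less_on N g \<eta>"
  shows "(SUP y\<in>N. g y) \<le> (INF y\<in>N. g y) + \<eta>"
proof (rule cSUP_least[OF \<open>N \<noteq> {}\<close>])
  fix z assume "z \<in> N"
  have "g z - \<eta> \<le> (INF y\<in>N. g y)"
  proof (rule cINF_greatest[OF \<open>N \<noteq> {}\<close>])
    fix y assume "y \<in> N"
    with \<open>z \<in> N\<close> assms(2) have "dist (g z) (g y) < \<eta>"
      unfolding oscillation_less_on_def by blast
    then show "g z - \<eta> \<le> g y" by (simp add: dist_real_def)
  qed
  then show "g z \<le> (INF y\<in>N. g y) + \<eta>" by linarith
qed

lemma cINF_cSUP_add_if_oscillation_less_on:
  fixes f g :: "'a \<Rightarrow> real"
  assumes "N \<noteq> {}" "bounded (f ` N)" "bounded (g ` N)"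
    and osc: "oscillation_less_on N f \<eta> \<or> oscillation_less_on N g \<eta>"
  shows "(INF y\<in>N. f y + g y) \<le> (INF y\<in>N. f y) + (INF y\<in>N. g y) + \<eta>"
    and "(SUP y\<in>N. f y) + (SUP y\<in>N. g y) \<le> (SUP y\<in>N. f y + g y) + \<eta>"
proof -
  have "(INF y\<in>N. f y + g y) \<le> (SUP y\<in>N. f y) + (INF y\<in>N. g y)"
    and "(INF y\<in>N. f y) + (SUP y\<in>N. g y) \<le> (SUP y\<in>N. f y + g y)"
    using cINF_add_le_cINF_plus_cSUP[OF assms(1,3,2)]
      cSUP_plus_cINF_le_cSUP_add[OF assms(1,3,2)]
    by (simp_all add: add.commute)
  moreover have "(SUP y\<in>N. f y) \<le> (INF y\<in>N. f y) + \<eta> \<or> (SUP y\<in>N. g y) \<le> (INF y\<in>N. g y) + \<eta>"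
    using osc cSUP_le_cINF_plus_if_oscillation_less_on[OF \<open>N \<noteq> {}\<close>] by blast
  ultimately show "(INF y\<in>N. f y + g y) \<le> (INF y\<in>N. f y) + (INF y\<in>N. g y) + \<eta>"
    and "(SUP y\<in>N. f y) + (SUP y\<in>N. g y) \<le> (SUP y\<in>N. f y + g y) + \<eta>"
    using cINF_add_le_cINF_plus_cSUP[OF assms(1,2,3)] cSUP_plus_cINF_le_cSUP_add[OF assms(1,2,3)]
    by (elim disjE; linarith)+
qed

lemma in_O_cball_iff:
  "in_O a b rho rhohat \<Delta> \<longleftrightarrow>
     (\<forall>x\<in>{a..b}. (INF y\<in>{a..b} \<inter> cball x \<Delta>. rhohat y) - \<Delta> < rho x \<and>
                 rho x < (SUP y\<in>{a..b} \<inter> cball x \<Delta>. rhohat y) + \<Delta>)"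
proof -
  have "{y\<in>{a..b}. \<bar>y - x\<bar> \<le> \<Delta>} = {a..b} \<inter> cball x \<Delta>" for x :: real
    by (auto simp: dist_real_def)
  then show ?thesis unfolding in_O_def by simp
qed

lemma in_O_add:
  fixes f g rf rg :: "real \<Rightarrow> real"
  assumes f: "in_O a b rf f d" and g: "in_O a b rg g d"
    and bdd: "bounded (f ` {a..b})" "bounded (g ` {a..b})"
    and osc: "\<And>x. x \<in> {a..b} \<Longrightarrow> oscillation_less_on ({a..b} \<inter> cball x \<delta>) f \<eta> \<or>
                                    oscillation_less_on ({a..b} \<inter> cball x \<delta>) g \<eta>"
    and "0 \<le> d" "d \<le> \<delta>" "0 \<le> \<eta>" "\<eta> + 2 * d \<le> \<Delta>"
  shows "in_O a b (\<lambda>x. rf x + rg x) (\<lambda>x. f x + g x) \<Delta>"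
  unfolding in_O_cball_iff
proof
  fix x assume "x \<in> {a..b}"
  define N where "N = {a..b} \<inter> cball x d"
  define N' where "N' = {a..b} \<inter> cball x \<Delta>"
  have "N \<noteq> {}" using \<open>x \<in> {a..b}\<close> \<open>0 \<le> d\<close> by (auto simp: N_def)
  have "N \<subseteq> N'" using assms(6,8,9) by (auto simp: N_def N'_def)
  have osc_N: "oscillation_less_on N f \<eta> \<or> oscillation_less_on N g \<eta>"
    using osc[OF \<open>x \<in> {a..b}\<close>] oscillation_less_on_subset[of "{a..b} \<inter> cball x \<delta>" _ _ N]
      subset_cball[OF \<open>d \<le> \<delta>\<close>] by (auto simp: N_def)
  have bdd_N: "bounded (f ` N)" "bounded (g ` N)"
    by (rule bounded_subset[OF bdd(1)] bounded_subset[OF bdd(2)], auto simp: N_def)+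
  have bdd_N': "bounded ((\<lambda>y. f y + g y) ` N')"
    by (rule bounded_subset[OF bounded_plus_comp[OF bdd]]) (auto simp: N'_def)
  have "(INF y\<in>N'. f y + g y) \<le> (INF y\<in>N. f y + g y)"
    using \<open>N \<noteq> {}\<close> bounded_imp_bdd_below[OF bdd_N'] \<open>N \<subseteq> N'\<close> by (rule cINF_superset_mono) simp
  moreover have "(SUP y\<in>N. f y + g y) \<le> (SUP y\<in>N'. f y + g y)"
    using \<open>N \<noteq> {}\<close> bounded_imp_bdd_above[OF bdd_N'] \<open>N \<subseteq> N'\<close> by (rule cSUP_subset_mono) simp
  moreover note cINF_cSUP_add_if_oscillation_less_on[OF \<open>N \<noteq> {}\<close> bdd_N osc_N]
  moreover have "(INF y\<in>N. f y) - d < rf x \<and> rf x < (SUP y\<in>N. f y) + d"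
    and "(INF y\<in>N. g y) - d < rg x \<and> rg x < (SUP y\<in>N. g y) + d"
    using f g \<open>x \<in> {a..b}\<close> unfolding in_O_cball_iff N_def by blast+
  ultimately show "(INF y\<in>N'. f y + g y) - \<Delta> < rf x + rg x \<and>
      rf x + rg x < (SUP y\<in>N'. f y + g y) + \<Delta>"
    using \<open>\<eta> + 2 * d \<le> \<Delta>\<close> by linarith
qed

theorem mainTheorem14:
  fixes a b :: real and D1 D2 :: "real set"
    and rho1 rho2 :: "real \<Rightarrow> real" and rho1e rho2e :: "real \<Rightarrow> real \<Rightarrow> real"
  assumes "a < b"
    and "piecewise_cont_first_kind a b D1 rho1"
    and "piecewise_cont_first_kind a b D2 rho2"
    and "D1 \<inter> D2 = {}"
    and "family_lim a b rho1e rho1"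
    and "family_lim a b rho2e rho2"
  shows "family_lim a b (\<lambda>eps x. rho1e eps x + rho2e eps x) (\<lambda>x. rho1 x + rho2 x)"
  unfolding family_lim_def
proof (intro allI impI)
  fix \<Delta> :: real assume "\<Delta> > 0"
  have "\<And>x. x \<in> {a..b} \<Longrightarrow>
      continuous (at x within {a..b}) rho1 \<or> continuous (at x within {a..b}) rho2"
    using assms(2-4) unfolding piecewise_cont_first_kind_def by blast
  then obtain \<delta> where "\<delta> > 0" and osc: "\<And>x. x \<in> {a..b} \<Longrightarrow>
      oscillation_less_on ({a..b} \<inter> cball x \<delta>) rho1 (\<Delta>/2) \<or>
      oscillation_less_on ({a..b} \<inter> cball x \<delta>) rho2 (\<Delta>/2)"
    using compact_uniform_oscillation_less_either[OF compact_Icc] \<open>\<Delta> > 0\<close> half_gt_zero by blast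
  define d where "d = min \<delta> (\<Delta>/4)"
  have d: "d > 0" "d \<le> \<delta>" "\<Delta>/2 + 2 * d \<le> \<Delta>" using \<open>\<delta> > 0\<close> \<open>\<Delta> > 0\<close> by (auto simp: d_def)
  obtain e1 where "e1 > 0" and e1: "\<And>eps. 0 < eps \<Longrightarrow> eps < e1 \<Longrightarrow> in_O a b (rho1e eps) rho1 d"
    using assms(5) \<open>d > 0\<close> unfolding family_lim_def by blast
  obtain e2 where "e2 > 0" and e2: "\<And>eps. 0 < eps \<Longrightarrow> eps < e2 \<Longrightarrow> in_O a b (rho2e eps) rho2 d"
    using assms(6) \<open>d > 0\<close> unfolding family_lim_def by blast
  have "in_O a b (\<lambda>x. rho1e eps x + rho2e eps x) (\<lambda>x. rho1 x + rho2 x) \<Delta>"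
    if "0 < eps" "eps < min e1 e2" for eps
    using in_O_add[OF e1 e2 piecewise_cont_first_kind_bounded[OF assms(2)]
        piecewise_cont_first_kind_bounded[OF assms(3)] osc] that d \<open>\<Delta> > 0\<close>
    by simp
  then show "\<exists>eps0>0. \<forall>eps. 0 < eps \<and> eps < eps0 \<longrightarrow>
      in_O a b ((\<lambda>eps x. rho1e eps x + rho2e eps x) eps) (\<lambda>x. rho1 x + rho2 x) \<Delta>"
    using \<open>e1 > 0\<close> \<open>e2 > 0\<close> by (intro exI[of _ "min e1 e2"]) auto
qed

end
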